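(* Consider the system $x(k+1)=Ax(k)+Bu(k)+w(k)$ in closed loop with the control scheme described in the context (Algorithm ATCS), suppose that $\mathbb{P}_0(x(0),\{0\})$ is feasible, and let $\gamma_z=\gamma_v=0$ (so that the cost is $J_k=N_k$), with $\lambda=1$ used in the algorithm. Then, for any disturbance realization with $w(k)\in\mathcal{W}$ for all $k$, the problems $\mathbb{P}_k(x(k),\mathcal{Z}_{f,k})$, with $\mathcal{Z}_{f,k}$ selected according to the algorithm (and with the additional constraint $N_k\le N^*_{k-1}-1$ whenever the second branch is taken), are feasible for all $k=1,2,\ldots$ reached by the algorithm, and the optimal horizon length decreases by at least $1$ at each step, i.e. $N_k^*\le N_{k-1}^*-1$.
   Context: System: $x(k+1)=Ax(k)+Bu(k)+w(k)$ with $x(k)\in\mathbb{R}^n$, $u(k)\in\mathbb{R}^m$, disturbance $w(k)\in\mathcal{W}$; state/input constraints $x(k)\in\mathcal{X}(k)$, $u(k)\in\mathcal{U}(k)$, where $\mathcal{X}(k),\mathcal{U}(k),\mathcal{W}$ are convex sets. A reference trajectory $r(k)\in\mathbb{R}^n$ is given. $K\in\mathbb{R}^{m\times n}$ is such that $A_K=A+BK$ is Schur. $\mathcal{A}\oplus\mathcal{B}=\{a+b: a\in\mathcal{A},b\in\mathcal{B}\}$, $\mathcal{A}\ominus\mathcal{B}=\{a: \{a\}\oplus\mathcal{B}\subseteq\mathcal{A}\}$. Define $\mathcal{S}(0)=\{0\}$ and $\mathcal{S}(j)=\bigoplus_{i=0}^{j-1}A_K^i\mathcal{W}$ for $j\ge1$;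 tightened sets $\mathcal{Z}_k(j)=\mathcal{X}(k+j)\ominus\mathcal{S}(j)$, $\mathcal{V}_k(j)=\mathcal{U}(k+j)\ominus K\mathcal{S}(j)$. $\|\cdot\|$ is a fixed vector norm. Problem $\mathbb{P}_k(x(k),\mathcal{Z}_f)$, for a convex set $\mathcal{Z}_f$: minimize over $N_k\in\{1,2,\ldots\}$, $v_k(0),\ldots,v_k(N_k-1)$, $z_k(0),\ldots,z_k(N_k)$ the cost $J_k=N_k+\gamma_z\sum_{j=0}^{N_k}\|z_k(j)-r(k+j)\|+\gamma_v\sum_{j=0}^{N_k-1}\|v_k(j)\|$ subject to $z_k(0)=x(k)$, $z_k(j+1)=Az_k(j)+Bv_k(j)$, $z_k(j)\in\mathcal{Z}_k(j)$ for $j=1,\ldots,N_k-1$, $v_k(j)\in\mathcal{V}_k(j)$ for $j=0,\ldots,N_k-1$, and $z_k(N_k)\in\{r(k+N_k)\}\oplus\mathcal{Z}_f$. Algorithm ATCS (parameter $\lambda$): at $k=0$ solve $\mathbb{P}_0(x(0),\{0\})$, obtaining $(J_0^*,N_0^*,v_0^*,z_0^* )$; set $\mathcal{Z}_{f,0}=\{0\}$, $\bar N=N_0^*$, apply $u(0)=v_0^*(0)$. Then, while $N^*_{k}>1$, increment $k$ and: solve $\mathbb{P}_k(x(k),\{0\})$ with optimal cost $\tilde J_k^*$ ($\tilde J_k^*=\infty$ if infeasible). If $\tilde J_k^*>J^*_{k-1}-\lambda$, set $\mathcal{Z}_{f,k}=\mathcal{Z}_{f,k-1}\oplus A_K^{N^*_{k-1}-1}\mathcal{W}$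 and solve $\mathbb{P}_k(x(k),\mathcal{Z}_{f,k})$ with the additional constraint $N_k\le N^*_{k-1}-1$, letting its solution be $(J_k^*,N_k^*,v_k^*,z_k^* )$; otherwise let $(J_k^*,N_k^*,v_k^*,z_k^* )$ be the solution of $\mathbb{P}_k(x(k),\{0\})$, set $\mathcal{Z}_{f,k}=\{0\}$ and $\bar N=N_k^*$. Apply $u(k)=v_k^*(0)$, so $x(k+1)=Ax(k)+Bu(k)+w(k)$ with $w(k)\in\mathcal{W}$ arbitrary. Upon termination, return $\bar N$. *)

theory Defs
  imports "HOL-Analysis.Analysis"
begin

definition msum :: "'a::plus set \<Rightarrow> 'a set \<Rightarrow> 'a set" where
  "msum P Q = {p + q | p q. p \<in> P \<and> q \<in> Q}"

definition pdiff :: "'a::plus set \<Rightarrow> 'a set \<Rightarrow> 'a set" where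
  "pdiff P Q = {a. msum {a} Q \<subseteq> P}"

definition schur :: "real^'n^'n \<Rightarrow> bool" where
  "schur M \<longleftrightarrow> (\<forall>(l::complex) (v::complex^'n). v \<noteq> 0 \<and> map_matrix complex_of_real M *v v = l *s v
      \<longrightarrow> cmod l < 1)"

definition mpow_app :: "real^'n^'n \<Rightarrow> nat \<Rightarrow> real^'n \<Rightarrow> real^'n" where
  "mpow_app M i = ((\<lambda>x. M *v x) ^^ i)"

fun Sset :: "real^'n^'n \<Rightarrow> (real^'n) set \<Rightarrow> nat \<Rightarrow> (real^'n) set" where
  "Sset AK W 0 = {0}"
| "Sset AK W (Suc j) = msum (Sset AK W j) (mpow_app AK j ` W)"

definition feasible ::
  "real^'n^'n \<Rightarrow> real^'m^'n \<Rightarrow> real^'n^'m \<Rightarrow> (real^'n) set \<Rightarrow>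
   (nat \<Rightarrow> (real^'n) set) \<Rightarrow> (nat \<Rightarrow> (real^'m) set) \<Rightarrow> (nat \<Rightarrow> real^'n) \<Rightarrow>
   nat \<Rightarrow> real^'n \<Rightarrow> (real^'n) set \<Rightarrow> nat \<Rightarrow> (nat \<Rightarrow> real^'m) \<Rightarrow> (nat \<Rightarrow> real^'n) \<Rightarrow> bool" where
  "feasible A B K W X U r k x Zf N v z \<longleftrightarrow>
     N \<ge> 1 \<and> z 0 = x \<and>
     (\<forall>j<N. z (Suc j) = A *v z j + B *v v j) \<and>
     (\<forall>j\<in>{1..N-1}. z j \<in> pdiff (X (k + j)) (Sset (A + B ** K) W j)) \<and>
     (\<forall>j<N. v j \<in> pdiff (U (k + j)) ((\<lambda>s. K *v s) ` Sset (A + B ** K) W j)) \<and>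
     z N \<in> msum {r (k + N)} Zf"

definition cost ::
  "real \<Rightarrow> real \<Rightarrow> (nat \<Rightarrow> real^'n) \<Rightarrow> nat \<Rightarrow> nat \<Rightarrow> (nat \<Rightarrow> real^'m) \<Rightarrow> (nat \<Rightarrow> real^'n) \<Rightarrow> real" where
  "cost gz gv r k N v z =
     real N + gz * (\<Sum>j\<le>N. norm (z j - r (k + j))) + gv * (\<Sum>j<N. norm (v j))"

definition opt_sol ::
  "real^'n^'n \<Rightarrow> real^'m^'n \<Rightarrow> real^'n^'m \<Rightarrow> (real^'n) set \<Rightarrow>
   (nat \<Rightarrow> (real^'n) set) \<Rightarrow> (nat \<Rightarrow> (real^'m) set) \<Rightarrow> (nat \<Rightarrow> real^'n) \<Rightarrow> real \<Rightarrow> real \<Rightarrow>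
   nat \<Rightarrow> real^'n \<Rightarrow> (real^'n) set \<Rightarrow> nat option \<Rightarrow> nat \<Rightarrow> (nat \<Rightarrow> real^'m) \<Rightarrow> (nat \<Rightarrow> real^'n) \<Rightarrow> bool" where
  "opt_sol A B K W X U r gz gv k x Zf Nmax N v z \<longleftrightarrow>
     feasible A B K W X U r k x Zf N v z \<and> (case Nmax of None \<Rightarrow> True | Some M \<Rightarrow> N \<le> M) \<and>
     (\<forall>N' v' z'. feasible A B K W X U r k x Zf N' v' z' \<and>
        (case Nmax of None \<Rightarrow> True | Some M \<Rightarrow> N' \<le> M) \<longrightarrow>
        cost gz gv r k N v z \<le> cost gz gv r k N' v' z')"

text \<open>Optimal value of P_k(x, {0}) (infinity if infeasible).\<close>
definition opt_val ::
  "real^'n^'n \<Rightarrow> real^'m^'n \<Rightarrow> real^'n^'m \<Rightarrow> (real^'n) set \<Rightarrow>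
   (nat \<Rightarrow> (real^'n) set) \<Rightarrow> (nat \<Rightarrow> (real^'m) set) \<Rightarrow> (nat \<Rightarrow> real^'n) \<Rightarrow> real \<Rightarrow> real \<Rightarrow>
   nat \<Rightarrow> real^'n \<Rightarrow> ereal" where
  "opt_val A B K W X U r gz gv k x =
     Inf {ereal (cost gz gv r k N v z) | N v z. feasible A B K W X U r k x {0} N v z}"

text \<open>One iteration of ATCS at time k, given the new state x = x(k) and the previous
  optimal cost J = J*_{k-1}, horizon N = N*_{k-1} and terminal set Zf = Z_{f,k-1}.
  Produces (J', N', v', z', Zf') = (J*_k, N*_k, v*_k, z*_k, Z_{f,k}).\<close>
definition atcs_step ::
  "real^'n^'n \<Rightarrow> real^'m^'n \<Rightarrow> real^'n^'m \<Rightarrow> (real^'n) set \<Rightarrow>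
   (nat \<Rightarrow> (real^'n) set) \<Rightarrow> (nat \<Rightarrow> (real^'m) set) \<Rightarrow> (nat \<Rightarrow> real^'n) \<Rightarrow> real \<Rightarrow> real \<Rightarrow> real \<Rightarrow>
   nat \<Rightarrow> real^'n \<Rightarrow> real \<Rightarrow> nat \<Rightarrow> (real^'n) set \<Rightarrow>
   real \<Rightarrow> nat \<Rightarrow> (nat \<Rightarrow> real^'m) \<Rightarrow> (nat \<Rightarrow> real^'n) \<Rightarrow> (real^'n) set \<Rightarrow> bool" where
  "atcs_step A B K W X U r gz gv lam k x J N Zf J' N' v' z' Zf' \<longleftrightarrow>
     (if opt_val A B K W X U r gz gv k x > ereal (J - lam) then
        Zf' = msum Zf (mpow_app (A + B ** K) (N - 1) ` W) \<and>
        opt_sol A B K W X U r gz gv k x Zf' (Some (N - 1)) N' v' z'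
      else
        Zf' = {0} \<and> opt_sol A B K W X U r gz gv k x {0} None N' v' z') \<and>
     J' = cost gz gv r k N' v' z'"

text \<open>States (k, x(k), J*_k, N*_k, v*_k, z*_k, Z_{f,k}) reachable by the closed loop
  under ATCS, for some admissible disturbance realisation and some choice among optimal
  solutions, starting from x0.\<close>
inductive atcs_run ::
  "real^'n^'n \<Rightarrow> real^'m^'n \<Rightarrow> real^'n^'m \<Rightarrow> (real^'n) set \<Rightarrow>
   (nat \<Rightarrow> (real^'n) set) \<Rightarrow> (nat \<Rightarrow> (real^'m) set) \<Rightarrow> (nat \<Rightarrow> real^'n) \<Rightarrow> real \<Rightarrow> real \<Rightarrow> real \<Rightarrow>
   real^'n \<Rightarrow> nat \<Rightarrow> real^'n \<Rightarrow> real \<Rightarrow> nat \<Rightarrow> (nat \<Rightarrow> real^'m) \<Rightarrow> (nat \<Rightarrow> real^'n) \<Rightarrow> (real^'n) set \<Rightarrow> bool"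
  for A B K W X U r gz gv lam x0 where
  init: "opt_sol A B K W X U r gz gv 0 x0 {0} None N v z \<Longrightarrow>
         atcs_run A B K W X U r gz gv lam x0 0 x0 (cost gz gv r 0 N v z) N v z {0}"
| step: "atcs_run A B K W X U r gz gv lam x0 k x J N v z Zf \<Longrightarrow> N > 1 \<Longrightarrow> w \<in> W \<Longrightarrow>
         atcs_step A B K W X U r gz gv lam (Suc k) (A *v x + B *v v 0 + w) J N Zf J' N' v' z' Zf' \<Longrightarrow>
         atcs_run A B K W X U r gz gv lam x0 (Suc k) (A *v x + B *v v 0 + w) J' N' v' z' Zf'"

end

theory Submission
  imports Defs
begin

text \<open>If \<open>(v, z)\<close> is feasible for \<open>P\<^sub>k\<close> with horizon \<open>N > 1\<close> and the disturbance \<open>w\<close>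
  hits the plant, the shifted plan \<open>z(j+1) + A\<^sub>K\<^sup>j w\<close>, \<open>v(j+1) + K A\<^sub>K\<^sup>j w\<close> is feasible for
  \<open>P\<^sub>k\<^sub>+\<^sub>1\<close> with horizon \<open>N - 1\<close> and terminal set enlarged by \<open>A\<^sub>K\<^sup>N\<^sup>-\<^sup>1 W\<close>: since
  \<open>S(j+1) = S(j) \<oplus> A\<^sub>K\<^sup>j W\<close>, the tightening margin of step \<open>j + 1\<close> absorbs exactly the
  disturbance propagated by \<open>A\<^sub>K\<close>. With \<open>\<gamma>\<^sub>z = \<gamma>\<^sub>v = 0\<close> the cost is the horizon, so the
  least feasible horizon is optimal. At each step either the fresh problem with terminal set
  \<open>{0}\<close> lowers the cost by \<open>\<lambda> > 0\<close>, or the algorithm falls back to the enlarged problem, which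
  the shifted plan makes feasible within the bound \<open>N - 1\<close>; either way the horizon drops.\<close>

lemma mpow_app_0 [simp]: "mpow_app M 0 x = x"
  by (simp add: mpow_app_def)

lemma mpow_app_Suc [simp]: "mpow_app M (Suc j) x = M *v mpow_app M j x"
  by (simp add: mpow_app_def)

lemma pdiff_msum_shift:
  fixes a t :: "'a::ab_semigroup_add"
  assumes "a \<in> pdiff P (msum S T)" and "t \<in> T"
  shows "a + t \<in> pdiff P S"
  using assms by (fastforce simp: pdiff_def msum_def add.assoc add.commute[of t])

lemma msum_image_additive:
  assumes "\<And>x y. f (x + y) = f x + f y"
  shows "f ` msum S T = msum (f ` S) (f ` T)"
  unfolding msum_def image_def using assms by (auto 0 4)

lemma add_in_msum_msum:
  fixes p t :: "'a::ab_semigroup_add"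
  assumes "p \<in> msum P Q" and "t \<in> T"
  shows "p + t \<in> msum P (msum Q T)"
  using assms by (force simp: msum_def add.assoc)

lemma feasible_shifted:
  assumes feas: "feasible A B K W X U r k x Zf N v z" and "1 < N" and "w \<in> W"
  defines "M \<equiv> A + B ** K"
  shows "feasible A B K W X U r (Suc k) (A *v x + B *v v 0 + w)
     (msum Zf (mpow_app M (N - 1) ` W)) (N - 1)
     (\<lambda>j. v (Suc j) + K *v mpow_app M j w) (\<lambda>j. z (Suc j) + mpow_app M j w)"
proof -
  from feas have "z 0 = x" and dyn: "\<And>j. j < N \<Longrightarrow> z (Suc j) = A *v z j + B *v v j"
    and state: "\<And>j. j \<in> {1..N-1} \<Longrightarrow> z j \<in> pdiff (X (k + j)) (Sset M W j)"
    and input: "\<And>j. j < N \<Longrightarrow> v j \<in> pdiff (U (k + j)) ((*v) K ` Sset M W j)"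
    and terminal: "z N \<in> msum {r (k + N)} Zf"
    by (auto simp: feasible_def M_def)
  have "z (Suc 0) + mpow_app M 0 w = A *v x + B *v v 0 + w"
    using dyn[of 0] \<open>z 0 = x\<close> \<open>1 < N\<close> by simp
  moreover have "z (Suc (Suc j)) + mpow_app M (Suc j) w =
      A *v (z (Suc j) + mpow_app M j w) + B *v (v (Suc j) + K *v mpow_app M j w)"
    if "j < N - 1" for j
  proof -
    have "M *v y = A *v y + B *v (K *v y)" for y
      by (simp add: M_def matrix_vector_mult_add_rdistrib matrix_vector_mul_assoc)
    with dyn[of "Suc j"] that show ?thesis
      by (simp add: matrix_vector_right_distrib algebra_simps)
  qed
  moreover have "z (Suc j) + mpow_app M j w \<in> pdiff (X (Suc k + j)) (Sset M W j)"
    if "j \<in> {1..N-1-1}" for j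
  proof -
    have "z (Suc j) \<in> pdiff (X (k + Suc j)) (msum (Sset M W j) (mpow_app M j ` W))"
      using state[of "Suc j"] that by auto
    from pdiff_msum_shift[OF this] \<open>w \<in> W\<close> show ?thesis by simp
  qed
  moreover have "v (Suc j) + K *v mpow_app M j w \<in> pdiff (U (Suc k + j)) ((*v) K ` Sset M W j)"
    if "j < N - 1" for j
  proof -
    have "v (Suc j) \<in> pdiff (U (k + Suc j)) (msum ((*v) K ` Sset M W j) ((*v) K ` mpow_app M j ` W))"
      using input[of "Suc j"] that by (simp add: msum_image_additive matrix_vector_right_distrib)
    from pdiff_msum_shift[OF this] \<open>w \<in> W\<close> show ?thesis by simp
  qed
  moreover have "z N + mpow_app M (N - 1) w \<in> msum {r (k + N)} (msum Zf (mpow_app M (N - 1) ` W))"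
    using add_in_msum_msum[OF terminal] \<open>w \<in> W\<close> by simp
  ultimately show ?thesis
    using \<open>1 < N\<close> by (auto simp: feasible_def M_def Suc_diff_Suc)
qed

lemma cost_horizon [simp]: "cost 0 0 r k N v z = real N"
  by (simp add: cost_def)

lemma opt_sol_exists:
  assumes "feasible A B K W X U r k x Zf N v z"
    and "case Nmax of None \<Rightarrow> True | Some M \<Rightarrow> N \<le> M"
  shows "\<exists>N v z. opt_sol A B K W X U r 0 0 k x Zf Nmax N v z"
proof -
  define admissible where "admissible N \<longleftrightarrow> (\<exists>v z. feasible A B K W X U r k x Zf N v z \<and>
    (case Nmax of None \<Rightarrow> True | Some M \<Rightarrow> N \<le> M))" for N
  have "admissible N"
    using assms unfolding admissible_def by blast
  then obtain N\<^sub>0 where "admissible N\<^sub>0" and least: "\<And>N'. admissible N' \<Longrightarrow> N\<^sub>0 \<le> N'"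
    by (metis Least_le LeastI)
  then obtain v\<^sub>0 z\<^sub>0 where "feasible A B K W X U r k x Zf N\<^sub>0 v\<^sub>0 z\<^sub>0"
    and "case Nmax of None \<Rightarrow> True | Some M \<Rightarrow> N\<^sub>0 \<le> M"
    unfolding admissible_def by blast
  moreover have "real N\<^sub>0 \<le> real N'" if "feasible A B K W X U r k x Zf N' v' z'"
    and "case Nmax of None \<Rightarrow> True | Some M \<Rightarrow> N' \<le> M" for N' v' z'
    using least[of N'] that unfolding admissible_def by auto
  ultimately have "opt_sol A B K W X U r 0 0 k x Zf Nmax N\<^sub>0 v\<^sub>0 z\<^sub>0"
    unfolding opt_sol_def cost_horizon by blast
  then show ?thesis
    by blast
qed

lemma opt_val_finite_imp_feasible:
  assumes "opt_val A B K W X U r gz gv k x < \<infinity>"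
  shows "\<exists>N v z. feasible A B K W X U r k x {0} N v z"
proof (rule ccontr)
  assume "\<nexists>N v z. feasible A B K W X U r k x {0} N v z"
  then have "opt_val A B K W X U r gz gv k x = Inf {}"
    unfolding opt_val_def by simp
  with assms show False
    by (simp add: top_ereal_def)
qed

lemma opt_sol_horizon_le_opt_val:
  assumes "opt_sol A B K W X U r 0 0 k x {0} None N v z"
  shows "ereal (real N) \<le> opt_val A B K W X U r 0 0 k x"
  using assms unfolding opt_val_def opt_sol_def by (force intro: Inf_greatest)

lemma atcs_run_feasible:
  assumes "atcs_run A B K W X U r 0 0 lam x0 k x J N v z Zf"
  shows "feasible A B K W X U r k x Zf N v z \<and> J = real N"
  using assms
  by induction (auto simp: opt_sol_def atcs_step_def split: if_splits)

lemma atcs_step_exists: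
  assumes "feasible A B K W X U r k x Zf N v z" and "1 < N" and "w \<in> W"
  shows "\<exists>J' N' v' z' Zf'.
    atcs_step A B K W X U r 0 0 lam (Suc k) (A *v x + B *v v 0 + w) J N Zf J' N' v' z' Zf'"
proof (cases "opt_val A B K W X U r 0 0 (Suc k) (A *v x + B *v v 0 + w) > ereal (J - lam)")
  case True
  from opt_sol_exists[OF feasible_shifted[OF assms], of "Some (N - 1)"]
  show ?thesis
    using True by (auto simp: atcs_step_def)
next
  case False
  then have "opt_val A B K W X U r 0 0 (Suc k) (A *v x + B *v v 0 + w) < \<infinity>"
    by (auto simp: not_less)
  then obtain N\<^sub>1 v\<^sub>1 z\<^sub>1
    where "feasible A B K W X U r (Suc k) (A *v x + B *v v 0 + w) {0} N\<^sub>1 v\<^sub>1 z\<^sub>1"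
    using opt_val_finite_imp_feasible by blast
  from opt_sol_exists[OF this, of None]
  show ?thesis
    using False by (auto simp: atcs_step_def)
qed

lemma atcs_step_horizon_decreases:
  assumes "atcs_step A B K W X U r 0 0 lam k x (real N) N Zf J' N' v' z' Zf'" and "0 < lam"
  shows "N' \<le> N - 1"
proof (cases "opt_val A B K W X U r 0 0 k x > ereal (real N - lam)")
  case True
  then show ?thesis
    using assms(1) by (simp add: atcs_step_def opt_sol_def)
next
  case False
  then have "opt_sol A B K W X U r 0 0 k x {0} None N' v' z'"
    using assms(1) by (simp add: atcs_step_def)
  then have "ereal (real N') \<le> opt_val A B K W X U r 0 0 k x"
    by (rule opt_sol_horizon_le_opt_val)
  also have "\<dots> \<le> ereal (real N - lam)"
    using False by simp
  finally have "real N' \<le> real N - lam"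
    by simp
  then show ?thesis
    using \<open>0 < lam\<close> by simp
qed

theorem corollary1:
  fixes A :: "real^'n^'n" and B :: "real^'m^'n" and K :: "real^'n^'m"
    and W :: "(real^'n) set" and X :: "nat \<Rightarrow> (real^'n) set" and U :: "nat \<Rightarrow> (real^'m) set"
    and r :: "nat \<Rightarrow> real^'n" and x0 :: "real^'n"
  assumes convW: "convex W"
    and convX: "\<And>k. convex (X k)"
    and convU: "\<And>k. convex (U k)"
    and schurK: "schur (A + B ** K)"
    and feas0: "\<exists>N v z. feasible A B K W X U r 0 x0 {0} N v z"
  shows "(\<exists>N v z. opt_sol A B K W X U r 0 0 0 x0 {0} None N v z) \<and>
    (\<forall>k x J N v z Zf w.
       atcs_run A B K W X U r 0 0 1 x0 k x J N v z Zf \<and> 1 < N \<and> w \<in> W \<longrightarrow>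
       (\<exists>J' N' v' z' Zf'. atcs_step A B K W X U r 0 0 1 (Suc k) (A *v x + B *v v 0 + w) J N Zf J' N' v' z' Zf') \<and>
       (\<forall>J' N' v' z' Zf'. atcs_step A B K W X U r 0 0 1 (Suc k) (A *v x + B *v v 0 + w) J N Zf J' N' v' z' Zf'
          \<longrightarrow> N' \<le> N - 1))"
proof -
  from feas0 have "\<exists>N v z. opt_sol A B K W X U r 0 0 0 x0 {0} None N v z"
    using opt_sol_exists[where Nmax = None] by auto
  moreover have "feasible A B K W X U r k x Zf N v z" and "J = real N"
    if "atcs_run A B K W X U r 0 0 1 x0 k x J N v z Zf" for k x J N v z Zf
    using atcs_run_feasible[OF that] by auto
  ultimately show ?thesis
    using atcs_step_exists atcs_step_horizon_decreases[where lam = 1] by (metis zero_less_one)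
qed

end
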